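(* Let $H=(a_1,a_2)$ be a bounded open interval in $\mathbb R$, $\mathcal B$ a finite index set, $m\ge2$. Assume for each $\beta\in\mathcal B$: $b_\beta,\theta_\beta\in C^m(\bar H)$, $b_\beta>0$ on $\bar H$, $\theta_\beta(H)\subset H$; and that there exist $\mu\ge1$ and $\kappa<1$ with $|\theta_\omega(x)-\theta_\omega(y)|\le\kappa|x-y|$ for all $\omega\in\mathcal B_\mu$, $x,y\in\bar H$. Assume also that $\theta_\beta'(u)\ge0$, $\theta_\beta''(u)\ge0$, $b_\beta'(u)\ge0$, $b_\beta''(u)\ge0$ and $$b_\beta''(u)b_\beta(u)-(1-s)[b_\beta'(u)]^2\ge0$$ for all $\beta\in\mathcal B$, all $u\in H$, and a given real number $s$. If $s>0$ and $v_s$ is the strictly positive $C^m$ eigenvector of $(L_sf)(x)=\sum_{\beta\in\mathcal B}[b_\beta(x)]^sf(\theta_\beta(x))$ on $C^m(\bar H)$, then $Dv_s(u)\ge0$ and $D^2v_s(u)\ge0$ for all $u\in\bar H$. If in addition there is a set $F\subset\bar H$ (possibly empty) such that for all $u\in\bar H\setminus F$ and all $\beta\in\mathcal B$, $b_\beta'(u)>0$ and $b_\beta''(u)b_\beta(u)-(1-s)[b_\beta'(u)]^2>0$, then $Dv_s(u)>0$ and $D^2v_s(u)>0$ for all $u\in\bar H\setminus F$.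
   Context: $D=d/dx$. $\mathcal B_\mu=\{(j_1,\ldots,j_\mu):j_k\in\mathcal B\}$ and $\theta_{(j_1,\ldots,j_\mu)}=\theta_{j_\mu}\circ\cdots\circ\theta_{j_1}$. Under the hypotheses, $L_s$ on $C^m(\bar H)$ has a strictly positive $C^m$ eigenvector with eigenvalue $r(L_s)$, unique up to positive multiples. *)

theory Defs
  imports "HOL-Analysis.Analysis"
begin

definition Cm_on :: "nat \<Rightarrow> real \<Rightarrow> real \<Rightarrow> (real \<Rightarrow> real) \<Rightarrow> bool" where
  "Cm_on m a b f \<longleftrightarrow>
     (\<exists>D. D 0 = f \<and> (\<forall>k\<le>m. continuous_on {a..b} (D k)) \<and>
          (\<forall>k<m. \<forall>x\<in>{a..b}. (D k has_real_derivative D (Suc k) x) (at x within {a..b})))"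

text \<open>theta_omega for omega = (j_1,...,j_mu): theta_{j_mu} o ... o theta_{j_1}.\<close>
definition theta_word :: "('b \<Rightarrow> real \<Rightarrow> real) \<Rightarrow> 'b list \<Rightarrow> real \<Rightarrow> real" where
  "theta_word \<theta> ws x = fold (\<lambda>j y. \<theta> j y) ws x"

definition L_op :: "'b set \<Rightarrow> ('b \<Rightarrow> real \<Rightarrow> real) \<Rightarrow> ('b \<Rightarrow> real \<Rightarrow> real) \<Rightarrow> real
     \<Rightarrow> (real \<Rightarrow> real) \<Rightarrow> real \<Rightarrow> real" where
  "L_op B b \<theta> s f x = (\<Sum>\<beta>\<in>B. (b \<beta> x) powr s * f (\<theta> \<beta> x))"

end

theory Submission imports Defs begin

text \<open>Differentiating the eigenvalue equation \<open>L\<^sub>s v = \<lambda> v\<close> once and twice shows that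
  \<open>g = Dv\<close> and \<open>g = D\<^sup>2v\<close> satisfy \<open>\<lambda> g \<ge> \<Sum>\<^sub>\<beta> b\<^sub>\<beta>\<^sup>s (\<theta>\<^sub>\<beta>')\<^sup>k g \<circ> \<theta>\<^sub>\<beta>\<close> for \<open>k = 1, 2\<close>: the
  remaining terms are nonnegative by the convexity hypotheses (for \<open>D\<^sup>2v\<close> once \<open>Dv \<ge> 0\<close> is known).
  Iterating this inequality along words of length \<open>n = \<mu> q\<close> and comparing with
  \<open>L\<^sub>s\<^sup>n v = \<lambda>\<^sup>n v\<close>, the bound \<open>(\<theta>\<^sub>\<omega>)' \<le> \<kappa>\<close> on words of length \<open>\<mu>\<close> gives
  \<open>g \<ge> -C \<kappa>\<^sup>k\<^sup>q\<close> for every \<open>q\<close>, so \<open>g \<ge> 0\<close>. Strict positivity off \<open>F\<close> is then read off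
  the differentiated equations, all of whose terms are nonnegative.\<close>

lemma has_real_derivative_unique_Icc:
  fixes f :: "real \<Rightarrow> real"
  assumes "a < b" "x \<in> {a..b}"
    and "(f has_real_derivative d1) (at x within {a..b})"
    and "(f has_real_derivative d2) (at x within {a..b})"
  shows "d1 = d2"
  using vector_derivative_unique_within_closed_interval[of a b x f d1 d2] assms
  by (simp add: has_real_derivative_iff_has_vector_derivative)

lemma has_real_derivative_eq_on_Icc:
  fixes f g :: "real \<Rightarrow> real"
  assumes "a < b" "x \<in> {a..b}" "\<And>y. y \<in> {a..b} \<Longrightarrow> f y = g y"
    and "(f has_real_derivative d1) (at x within {a..b})"
    and "(g has_real_derivative d2) (at x within {a..b})"
  shows "d1 = d2"
proof -
  have "(g has_real_derivative d1) (at x within {a..b})"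
    by (rule has_field_derivative_transform_within[OF assms(4), of 1]) (use assms in auto)
  then show ?thesis
    using has_real_derivative_unique_Icc[OF assms(1,2)] assms(5) by blast
qed

lemma Cm_on_continuous_second_derivative:
  fixes f f1 f2 :: "real \<Rightarrow> real"
  assumes ab: "a < b" and Cm: "Cm_on m a b f" and m: "m \<ge> 2"
    and d1: "\<forall>x\<in>{a..b}. (f has_real_derivative f1 x) (at x within {a..b})"
    and d2: "\<forall>x\<in>{a..b}. (f1 has_real_derivative f2 x) (at x within {a..b})"
  shows "continuous_on {a..b} f2"
proof -
  obtain D where D0: "D 0 = f" and Dc: "\<forall>k\<le>m. continuous_on {a..b} (D k)"
    and Dd: "\<forall>k<m. \<forall>x\<in>{a..b}. (D k has_real_derivative D (Suc k) x) (at x within {a..b})"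
    using Cm unfolding Cm_on_def by blast
  have D1: "D 1 x = f1 x" if "x \<in> {a..b}" for x
    using has_real_derivative_unique_Icc[OF ab that, of f] Dd[rule_format, of 0 x] d1 that m D0
    by auto
  have "D 2 x = f2 x" if x: "x \<in> {a..b}" for x
  proof -
    have "(f1 has_real_derivative D 2 x) (at x within {a..b})"
      by (rule has_field_derivative_transform_within[of "D 1" _ _ _ 1])
        (use Dd[rule_format, of 1 x] m x D1 in \<open>auto simp: numeral_2_eq_2\<close>)
    then show ?thesis using has_real_derivative_unique_Icc[OF ab x] d2 x by blast
  qed
  moreover have "continuous_on {a..b} (D 2)" using Dc m by auto
  ultimately show ?thesis using continuous_on_cong by blast
qed

lemma continuous_on_Icc_nonneg:
  fixes g :: "real \<Rightarrow> real"
  assumes "a < b" "continuous_on {a..b} g" "\<And>x. x \<in> {a<..<b} \<Longrightarrow> 0 \<le> g x"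
  shows "x \<in> {a..b} \<Longrightarrow> 0 \<le> g x"
proof -
  have "g ` closure {a<..<b} \<subseteq> {0..}"
    by (rule image_closure_subset) (use assms in auto)
  then show "x \<in> {a..b} \<Longrightarrow> 0 \<le> g x" using assms(1) by fastforce
qed

lemma continuous_on_Icc_image_subset:
  fixes f :: "real \<Rightarrow> real"
  assumes "a < b" "continuous_on {a..b} f" "f ` {a<..<b} \<subseteq> {a<..<b}"
  shows "f ` {a..b} \<subseteq> {a..b}"
proof -
  have "f ` closure {a<..<b} \<subseteq> {a..b}"
    by (rule image_closure_subset) (use assms in auto)
  then show ?thesis using assms(1) by auto
qed

lemma has_real_derivative_le_Lipschitz:
  fixes f :: "real \<Rightarrow> real"
  assumes x: "a < x" "x < b"
    and f': "(f has_real_derivative d) (at x within {a..b})"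
    and Lipschitz: "\<And>y. y \<in> {a..b} \<Longrightarrow> \<bar>f y - f x\<bar> \<le> k * \<bar>y - x\<bar>"
  shows "d \<le> k"
proof -
  have "((\<lambda>y. (f y - f x) / (y - x)) \<longlongrightarrow> d) (at x within {a..b})"
    using f' has_field_derivative_iff by blast
  moreover have "eventually (\<lambda>y. (f y - f x) / (y - x) \<le> k) (at x within {a..b})"
    unfolding eventually_at_filter
  proof (intro always_eventually allI impI)
    fix y assume y: "y \<noteq> x" "y \<in> {a..b}"
    have "(f y - f x) / (y - x) \<le> \<bar>f y - f x\<bar> / \<bar>y - x\<bar>" by (metis abs_divide abs_ge_self)
    also have "\<dots> \<le> k" using Lipschitz y by (simp add: divide_le_eq)
    finally show "(f y - f x) / (y - x) \<le> k" .
  qed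
  moreover have "at x within {a..b} \<noteq> bot" using at_within_Icc_at[OF x] by simp
  ultimately show ?thesis using tendsto_le[OF _ tendsto_const] by blast
qed

lemma has_real_derivative_powr_mult_comp:
  fixes b \<theta> f :: "real \<Rightarrow> real"
  assumes b': "(b has_real_derivative db) (at x within S)" and b_pos: "0 < b x"
    and \<theta>': "(\<theta> has_real_derivative d\<theta>) (at x within S)" and maps: "\<theta> ` S \<subseteq> S"
    and f': "(f has_real_derivative df) (at (\<theta> x) within S)"
  shows "((\<lambda>y. b y powr s * f (\<theta> y)) has_real_derivative
           s * b x powr (s - 1) * db * f (\<theta> x) + b x powr s * d\<theta> * df) (at x within S)"
proof -
  have "((\<lambda>y. b y powr s) has_real_derivative s * b x powr (s - 1) * db) (at x within S)"
    using DERIV_chain2[OF has_real_derivative_powr[OF b_pos] b'] by simp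
  moreover have "((\<lambda>y. f (\<theta> y)) has_real_derivative df * d\<theta>) (at x within S)"
    using DERIV_image_chain[OF DERIV_subset[OF f' maps] \<theta>'] by (simp add: o_def)
  ultimately show ?thesis by (auto intro: DERIV_mult[THEN DERIV_cong] simp: mult_ac)
qed

lemma has_real_derivative_sum_eq_on_Icc:
  fixes T :: "'b \<Rightarrow> real \<Rightarrow> real" and T' :: "'b \<Rightarrow> real" and g :: "real \<Rightarrow> real"
  assumes "a < b" "x \<in> {a..b}"
    and eq: "\<And>y. y \<in> {a..b} \<Longrightarrow> (\<Sum>\<beta>\<in>B. T \<beta> y) = c * g y"
    and T': "\<And>\<beta>. \<beta> \<in> B \<Longrightarrow> (T \<beta> has_real_derivative T' \<beta>) (at x within {a..b})"
    and g': "(g has_real_derivative dg) (at x within {a..b})"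
  shows "c * dg = (\<Sum>\<beta>\<in>B. T' \<beta>)"
  using has_real_derivative_eq_on_Icc[OF assms(1,2) eq DERIV_sum[OF T'] DERIV_cmult[OF g']] by simp

section \<open>Words and orbit weights\<close>

definition words :: "'b set \<Rightarrow> nat \<Rightarrow> 'b list set" where
  "words B n = {ws. set ws \<subseteq> B \<and> length ws = n}"

text \<open>With \<open>w = \<theta>'\<close> this is the
  derivative of \<open>\<theta>\<^sub>\<omega>\<close> at \<open>x\<close>, with \<open>w = b\<^sup>s\<close> the coefficient of \<open>f \<circ> \<theta>\<^sub>\<omega>\<close> in \<open>L\<^sub>s\<^sup>n f\<close>.\<close>
fun orbit_weight :: "('b \<Rightarrow> real \<Rightarrow> real) \<Rightarrow> ('b \<Rightarrow> real \<Rightarrow> real) \<Rightarrow> 'b list \<Rightarrow> real \<Rightarrow> real" where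
  "orbit_weight \<theta> w [] x = 1"
| "orbit_weight \<theta> w (j # ws) x = w j x * orbit_weight \<theta> w ws (\<theta> j x)"

lemma theta_word_Nil [simp]: "theta_word \<theta> [] x = x"
  by (simp add: theta_word_def)

lemma theta_word_Cons [simp]: "theta_word \<theta> (j # ws) x = theta_word \<theta> ws (\<theta> j x)"
  by (simp add: theta_word_def)

lemma orbit_weight_append:
  "orbit_weight \<theta> w (us @ rs) x = orbit_weight \<theta> w us x * orbit_weight \<theta> w rs (theta_word \<theta> us x)"
  by (induction us arbitrary: x) auto

lemma orbit_weight_mult_power:
  "orbit_weight \<theta> (\<lambda>j y. w j y * u j y ^ k) ws x = orbit_weight \<theta> w ws x * orbit_weight \<theta> u ws x ^ k"
  by (induction ws arbitrary: x) (auto simp: power_mult_distrib mult_ac)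

lemma words_0 [simp]: "words B 0 = {[]}"
  by (auto simp: words_def)

lemma sum_words_Suc:
  assumes "finite B"
  shows "sum f (words B (Suc n)) = (\<Sum>j\<in>B. \<Sum>ws\<in>words B n. f (j # ws))"
proof -
  have eq: "words B (Suc n) = (\<lambda>(j, ws). j # ws) ` (B \<times> words B n)"
  proof (rule set_eqI, rule iffI)
    fix xs assume "xs \<in> words B (Suc n)"
    then show "xs \<in> (\<lambda>(j, ws). j # ws) ` (B \<times> words B n)"
      unfolding words_def by (cases xs) (auto intro!: image_eqI[where x="(hd xs, tl xs)"])
  qed (auto simp: words_def)
  have "inj_on (\<lambda>(j, ws). j # ws) (B \<times> words B n)" by (auto simp: inj_on_def)
  then show ?thesis
    unfolding eq by (simp add: sum.reindex sum.cartesian_product case_prod_unfold)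
qed

lemma words_mult_Suc_split:
  assumes "ws \<in> words B (\<mu> * Suc q)"
  shows "take \<mu> ws \<in> words B \<mu>" "drop \<mu> ws \<in> words B (\<mu> * q)"
  using assms by (auto simp: words_def dest: in_set_takeD in_set_dropD)

section \<open>Supersolutions of positive weighted composition operators\<close>

locale self_map_family =
  fixes B :: "'b set" and J :: "real set" and \<theta> :: "'b \<Rightarrow> real \<Rightarrow> real"
  assumes finite_B: "finite B"
    and maps_into: "\<And>\<beta> x. \<beta> \<in> B \<Longrightarrow> x \<in> J \<Longrightarrow> \<theta> \<beta> x \<in> J"
begin

lemma theta_word_mem: "set ws \<subseteq> B \<Longrightarrow> x \<in> J \<Longrightarrow> theta_word \<theta> ws x \<in> J"
  by (induction ws arbitrary: x) (auto simp: maps_into)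

lemma orbit_weight_nonneg:
  assumes "\<And>\<beta> x. \<beta> \<in> B \<Longrightarrow> x \<in> J \<Longrightarrow> 0 \<le> w \<beta> x"
  shows "set ws \<subseteq> B \<Longrightarrow> x \<in> J \<Longrightarrow> 0 \<le> orbit_weight \<theta> w ws x"
  by (induction ws arbitrary: x) (auto simp: assms maps_into)

lemma theta_word_has_derivative:
  assumes "\<And>\<beta> x. \<beta> \<in> B \<Longrightarrow> x \<in> J \<Longrightarrow> (\<theta> \<beta> has_real_derivative \<theta>' \<beta> x) (at x within J)"
  shows "set ws \<subseteq> B \<Longrightarrow> x \<in> J \<Longrightarrow>
    (theta_word \<theta> ws has_real_derivative orbit_weight \<theta> \<theta>' ws x) (at x within J)"
proof (induction ws arbitrary: x)
  case Nil
  then show ?case by (simp add: theta_word_def)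
next
  case (Cons j ws)
  have maps: "\<theta> j ` J \<subseteq> J" using maps_into Cons.prems by auto
  have "(theta_word \<theta> ws \<circ> \<theta> j has_real_derivative orbit_weight \<theta> \<theta>' ws (\<theta> j x) * \<theta>' j x) (at x within J)"
    by (rule DERIV_image_chain[OF DERIV_subset[OF Cons.IH maps]]) (use Cons.prems maps_into assms in auto)
  then show ?case by (simp add: o_def mult.commute)
qed

lemma orbit_weight_le_power:
  assumes w_nonneg: "\<And>\<beta> x. \<beta> \<in> B \<Longrightarrow> x \<in> J \<Longrightarrow> 0 \<le> w \<beta> x"
    and block: "\<And>us x. us \<in> words B \<mu> \<Longrightarrow> x \<in> J \<Longrightarrow> orbit_weight \<theta> w us x \<le> \<kappa>"
  shows "ws \<in> words B (\<mu> * q) \<Longrightarrow> x \<in> J \<Longrightarrow> orbit_weight \<theta> w ws x \<le> \<kappa> ^ q"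
proof (induction q arbitrary: ws x)
  case 0
  then show ?case by simp
next
  case (Suc q)
  let ?us = "take \<mu> ws" and ?rs = "drop \<mu> ws"
  note split = words_mult_Suc_split[OF Suc.prems(1)]
  have y: "theta_word \<theta> ?us x \<in> J"
    using theta_word_mem split Suc.prems by (auto simp: words_def)
  have "orbit_weight \<theta> w ws x = orbit_weight \<theta> w ?us x * orbit_weight \<theta> w ?rs (theta_word \<theta> ?us x)"
    by (metis append_take_drop_id orbit_weight_append)
  also have "\<dots> \<le> \<kappa> * \<kappa> ^ q"
  proof (rule mult_mono)
    show "orbit_weight \<theta> w ?us x \<le> \<kappa>" using block split Suc.prems by blast
    show "orbit_weight \<theta> w ?rs (theta_word \<theta> ?us x) \<le> \<kappa> ^ q" using Suc.IH split y by blast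
    show "0 \<le> \<kappa>"
      using block[OF split(1) Suc.prems(2)] orbit_weight_nonneg[OF w_nonneg] split Suc.prems
      by (force simp: words_def)
    show "0 \<le> orbit_weight \<theta> w ?rs (theta_word \<theta> ?us x)"
      using orbit_weight_nonneg[OF w_nonneg] split y by (auto simp: words_def)
  qed
  finally show ?case by simp
qed

lemma sum_words_supersolution:
  fixes g :: "real \<Rightarrow> real"
  assumes w_nonneg: "\<And>\<beta> x. \<beta> \<in> B \<Longrightarrow> x \<in> J \<Longrightarrow> 0 \<le> w \<beta> x"
    and lam: "0 \<le> lam"
    and super: "\<And>x. x \<in> J \<Longrightarrow> (\<Sum>\<beta>\<in>B. w \<beta> x * g (\<theta> \<beta> x)) \<le> lam * g x"
  shows "x \<in> J \<Longrightarrow> (\<Sum>ws\<in>words B n. orbit_weight \<theta> w ws x * g (theta_word \<theta> ws x)) \<le> lam ^ n * g x"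
proof (induction n arbitrary: x)
  case 0
  then show ?case by simp
next
  case (Suc n)
  have "(\<Sum>ws\<in>words B (Suc n). orbit_weight \<theta> w ws x * g (theta_word \<theta> ws x))
      = (\<Sum>\<beta>\<in>B. w \<beta> x * (\<Sum>ws\<in>words B n. orbit_weight \<theta> w ws (\<theta> \<beta> x) * g (theta_word \<theta> ws (\<theta> \<beta> x))))"
    by (simp add: sum_words_Suc[OF finite_B] sum_distrib_left mult.assoc)
  also have "\<dots> \<le> (\<Sum>\<beta>\<in>B. w \<beta> x * (lam ^ n * g (\<theta> \<beta> x)))"
    using Suc maps_into w_nonneg by (intro sum_mono mult_left_mono) auto
  also have "\<dots> = lam ^ n * (\<Sum>\<beta>\<in>B. w \<beta> x * g (\<theta> \<beta> x))"
    by (simp add: sum_distrib_left mult_ac)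
  also have "\<dots> \<le> lam ^ n * (lam * g x)"
    using super Suc.prems lam by (intro mult_left_mono) auto
  finally show ?case by (simp add: mult_ac)
qed

lemma sum_orbit_weight_le:
  fixes v :: "real \<Rightarrow> real"
  assumes w_nonneg: "\<And>\<beta> x. \<beta> \<in> B \<Longrightarrow> x \<in> J \<Longrightarrow> 0 \<le> w \<beta> x"
    and lam: "0 \<le> lam"
    and v_super: "\<And>x. x \<in> J \<Longrightarrow> (\<Sum>\<beta>\<in>B. w \<beta> x * v (\<theta> \<beta> x)) \<le> lam * v x"
    and c: "0 < c" "\<And>x. x \<in> J \<Longrightarrow> c \<le> v x"
    and x: "x \<in> J"
  shows "(\<Sum>ws\<in>words B n. orbit_weight \<theta> w ws x) \<le> lam ^ n * v x / c"
proof -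
  have "(\<Sum>ws\<in>words B n. orbit_weight \<theta> w ws x)
      \<le> (\<Sum>ws\<in>words B n. orbit_weight \<theta> w ws x * v (theta_word \<theta> ws x) / c)"
  proof (rule sum_mono)
    fix ws assume "ws \<in> words B n"
    then have "0 \<le> orbit_weight \<theta> w ws x" "1 \<le> v (theta_word \<theta> ws x) / c"
      using orbit_weight_nonneg[OF w_nonneg] theta_word_mem c x by (auto simp: words_def)
    then show "orbit_weight \<theta> w ws x \<le> orbit_weight \<theta> w ws x * v (theta_word \<theta> ws x) / c"
      using mult_left_mono by fastforce
  qed
  also have "\<dots> \<le> lam ^ n * v x / c"
    unfolding sum_divide_distrib[symmetric]
    using sum_words_supersolution[OF w_nonneg lam v_super x] c by (simp add: divide_right_mono)
  finally show ?thesis .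
qed

context
  fixes w \<theta>' :: "'b \<Rightarrow> real \<Rightarrow> real" and v g :: "real \<Rightarrow> real"
    and lam c G \<kappa> :: real and k \<mu> :: nat
  assumes w_nonneg: "\<And>\<beta> x. \<beta> \<in> B \<Longrightarrow> x \<in> J \<Longrightarrow> 0 \<le> w \<beta> x"
    and \<theta>'_nonneg: "\<And>\<beta> x. \<beta> \<in> B \<Longrightarrow> x \<in> J \<Longrightarrow> 0 \<le> \<theta>' \<beta> x"
    and block: "\<And>us x. us \<in> words B \<mu> \<Longrightarrow> x \<in> J \<Longrightarrow> orbit_weight \<theta> \<theta>' us x \<le> \<kappa>"
    and \<kappa>: "0 \<le> \<kappa>" "\<kappa> < 1" and k: "0 < k"
    and lam: "0 < lam"
    and v_super: "\<And>x. x \<in> J \<Longrightarrow> (\<Sum>\<beta>\<in>B. w \<beta> x * v (\<theta> \<beta> x)) \<le> lam * v x"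
    and v_lower: "0 < c" "\<And>x. x \<in> J \<Longrightarrow> c \<le> v x"
    and g_bound: "\<And>x. x \<in> J \<Longrightarrow> \<bar>g x\<bar> \<le> G"
    and g_super: "\<And>x. x \<in> J \<Longrightarrow> (\<Sum>\<beta>\<in>B. w \<beta> x * \<theta>' \<beta> x ^ k * g (\<theta> \<beta> x)) \<le> lam * g x"
begin

lemma supersolution_lower_bound:
  assumes x: "x \<in> J"
  shows "- (G * v x / c) * (\<kappa> ^ k) ^ q \<le> g x"
proof -
  let ?n = "\<mu> * q"
  let ?W = "\<lambda>ws. orbit_weight \<theta> w ws x" and ?D = "\<lambda>ws. orbit_weight \<theta> \<theta>' ws x"
  have G: "0 \<le> G" using g_bound[OF x] by linarith
  have nonneg: "0 \<le> ?W ws" "0 \<le> ?D ws" "theta_word \<theta> ws x \<in> J" if "ws \<in> words B ?n" for ws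
    using that orbit_weight_nonneg[OF w_nonneg] orbit_weight_nonneg[OF \<theta>'_nonneg] theta_word_mem x
    by (auto simp: words_def)
  have "lam ^ ?n * (- (G * v x / c) * (\<kappa> ^ k) ^ q) = - G * (\<kappa> ^ k) ^ q * (lam ^ ?n * v x / c)"
    by simp
  also have "\<dots> \<le> - G * (\<kappa> ^ k) ^ q * (\<Sum>ws\<in>words B ?n. ?W ws)"
    using sum_orbit_weight_le[OF w_nonneg _ v_super v_lower x] lam G \<kappa>
    by (intro mult_left_mono_neg) auto
  also have "\<dots> \<le> (\<Sum>ws\<in>words B ?n. ?W ws * ?D ws ^ k * (- G))"
    unfolding sum_distrib_left
  proof (rule sum_mono)
    fix ws assume ws: "ws \<in> words B ?n"
    have "?D ws ^ k \<le> (\<kappa> ^ q) ^ k"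
      using orbit_weight_le_power[OF \<theta>'_nonneg block ws x] nonneg[OF ws] by (simp add: power_mono)
    then have "?D ws ^ k \<le> (\<kappa> ^ k) ^ q"
      by (simp add: mult.commute flip: power_mult)
    then have "?W ws * ?D ws ^ k \<le> ?W ws * (\<kappa> ^ k) ^ q"
      by (rule mult_left_mono[OF _ nonneg(1)[OF ws]])
    then have "G * (?W ws * ?D ws ^ k) \<le> G * (?W ws * (\<kappa> ^ k) ^ q)"
      using G by (rule mult_left_mono)
    then show "- G * (\<kappa> ^ k) ^ q * ?W ws \<le> ?W ws * ?D ws ^ k * (- G)"
      by (simp add: algebra_simps)
  qed
  also have "\<dots> \<le> (\<Sum>ws\<in>words B ?n. ?W ws * ?D ws ^ k * g (theta_word \<theta> ws x))"
    using nonneg g_bound by (intro sum_mono mult_left_mono) (force simp: abs_le_iff)+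
  also have "\<dots> \<le> lam ^ ?n * g x"
    using sum_words_supersolution[of "\<lambda>\<beta> y. w \<beta> y * \<theta>' \<beta> y ^ k", OF _ _ g_super x]
      w_nonneg \<theta>'_nonneg lam by (simp add: orbit_weight_mult_power)
  finally show ?thesis
    using lam by (metis mult_le_cancel_left_pos zero_less_power)
qed

lemma supersolution_nonneg:
  assumes x: "x \<in> J"
  shows "0 \<le> g x"
proof -
  have "\<bar>\<kappa> ^ k\<bar> < 1" using \<kappa> k by (simp add: power_less_one_iff abs_of_nonneg)
  then have "(\<lambda>q. - (G * v x / c) * (\<kappa> ^ k) ^ q) \<longlonglongrightarrow> 0"
    by (intro tendsto_mult_right_zero LIMSEQ_power_zero) simp
  then show ?thesis using supersolution_lower_bound[OF x] LIMSEQ_le_const2 by blast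
qed

end

end

section \<open>Monotonicity and convexity of the eigenfunction\<close>

locale ruelle_eigenfunction =
  fixes a1 a2 s lam \<kappa> :: real and \<mu> :: nat and B :: "'b set"
    and b \<theta> b1 b2 \<theta>1 \<theta>2 :: "'b \<Rightarrow> real \<Rightarrow> real" and v v1 v2 :: "real \<Rightarrow> real"
  assumes interval: "a1 < a2"
    and finite_B: "finite B" and B_nonempty: "B \<noteq> {}"
    and b_deriv: "\<And>\<beta> x. \<beta> \<in> B \<Longrightarrow> x \<in> {a1..a2} \<Longrightarrow>
      (b \<beta> has_real_derivative b1 \<beta> x) (at x within {a1..a2})"
    and b1_deriv: "\<And>\<beta> x. \<beta> \<in> B \<Longrightarrow> x \<in> {a1..a2} \<Longrightarrow>
      (b1 \<beta> has_real_derivative b2 \<beta> x) (at x within {a1..a2})"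
    and \<theta>_deriv: "\<And>\<beta> x. \<beta> \<in> B \<Longrightarrow> x \<in> {a1..a2} \<Longrightarrow>
      (\<theta> \<beta> has_real_derivative \<theta>1 \<beta> x) (at x within {a1..a2})"
    and \<theta>1_deriv: "\<And>\<beta> x. \<beta> \<in> B \<Longrightarrow> x \<in> {a1..a2} \<Longrightarrow>
      (\<theta>1 \<beta> has_real_derivative \<theta>2 \<beta> x) (at x within {a1..a2})"
    and \<theta>2_continuous: "\<And>\<beta>. \<beta> \<in> B \<Longrightarrow> continuous_on {a1..a2} (\<theta>2 \<beta>)"
    and b_pos: "\<And>\<beta> x. \<beta> \<in> B \<Longrightarrow> x \<in> {a1..a2} \<Longrightarrow> 0 < b \<beta> x"
    and \<theta>_maps: "\<And>\<beta>. \<beta> \<in> B \<Longrightarrow> \<theta> \<beta> ` {a1<..<a2} \<subseteq> {a1<..<a2}"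
    and contraction: "\<And>ws x y. length ws = \<mu> \<Longrightarrow> set ws \<subseteq> B \<Longrightarrow> x \<in> {a1..a2} \<Longrightarrow> y \<in> {a1..a2} \<Longrightarrow>
      \<bar>theta_word \<theta> ws x - theta_word \<theta> ws y\<bar> \<le> \<kappa> * \<bar>x - y\<bar>"
    and \<kappa>_less_1: "\<kappa> < 1"
    and \<theta>1_nonneg: "\<And>\<beta> u. \<beta> \<in> B \<Longrightarrow> u \<in> {a1<..<a2} \<Longrightarrow> 0 \<le> \<theta>1 \<beta> u"
    and \<theta>2_nonneg: "\<And>\<beta> u. \<beta> \<in> B \<Longrightarrow> u \<in> {a1<..<a2} \<Longrightarrow> 0 \<le> \<theta>2 \<beta> u"
    and b1_nonneg: "\<And>\<beta> u. \<beta> \<in> B \<Longrightarrow> u \<in> {a1<..<a2} \<Longrightarrow> 0 \<le> b1 \<beta> u"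
    and convexity: "\<And>\<beta> u. \<beta> \<in> B \<Longrightarrow> u \<in> {a1<..<a2} \<Longrightarrow> 0 \<le> b2 \<beta> u * b \<beta> u - (1 - s) * (b1 \<beta> u)\<^sup>2"
    and s_pos: "0 < s"
    and v_pos: "\<And>x. x \<in> {a1..a2} \<Longrightarrow> 0 < v x"
    and eigen: "\<And>x. x \<in> {a1..a2} \<Longrightarrow> L_op B b \<theta> s v x = lam * v x"
    and v_deriv: "\<And>x. x \<in> {a1..a2} \<Longrightarrow> (v has_real_derivative v1 x) (at x within {a1..a2})"
    and v1_deriv: "\<And>x. x \<in> {a1..a2} \<Longrightarrow> (v1 has_real_derivative v2 x) (at x within {a1..a2})"
    and v2_continuous: "continuous_on {a1..a2} v2"
begin

sublocale interior: self_map_family B "{a1<..<a2}" \<theta>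
  using finite_B \<theta>_maps by unfold_locales blast+

lemma \<theta>_continuous: "\<beta> \<in> B \<Longrightarrow> continuous_on {a1..a2} (\<theta> \<beta>)"
  using \<theta>_deriv by (intro DERIV_continuous_on) auto

lemma \<theta>_maps_Icc: "\<beta> \<in> B \<Longrightarrow> \<theta> \<beta> ` {a1..a2} \<subseteq> {a1..a2}"
  using continuous_on_Icc_image_subset[OF interval \<theta>_continuous \<theta>_maps] .

sublocale closed: self_map_family B "{a1..a2}" \<theta>
  using finite_B \<theta>_maps_Icc by unfold_locales blast+

lemma v_continuous: "continuous_on {a1..a2} v"
  using v_deriv by (intro DERIV_continuous_on) auto

lemma v1_continuous: "continuous_on {a1..a2} v1"
  using v1_deriv by (intro DERIV_continuous_on) auto

lemma b1_nonneg_Icc: "\<beta> \<in> B \<Longrightarrow> u \<in> {a1..a2} \<Longrightarrow> 0 \<le> b1 \<beta> u"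
  using continuous_on_Icc_nonneg[OF interval _ b1_nonneg] b1_deriv
  by (meson DERIV_continuous_on)

lemma \<theta>1_nonneg_Icc: "\<beta> \<in> B \<Longrightarrow> u \<in> {a1..a2} \<Longrightarrow> 0 \<le> \<theta>1 \<beta> u"
  using continuous_on_Icc_nonneg[OF interval _ \<theta>1_nonneg] \<theta>1_deriv
  by (meson DERIV_continuous_on)

lemma \<theta>2_nonneg_Icc: "\<beta> \<in> B \<Longrightarrow> u \<in> {a1..a2} \<Longrightarrow> 0 \<le> \<theta>2 \<beta> u"
  using continuous_on_Icc_nonneg[OF interval \<theta>2_continuous \<theta>2_nonneg] .

lemma \<kappa>_nonneg: "0 \<le> \<kappa>"
proof -
  obtain \<beta> where "\<beta> \<in> B" using B_nonempty by blast
  then have "\<bar>theta_word \<theta> (replicate \<mu> \<beta>) a2 - theta_word \<theta> (replicate \<mu> \<beta>) a1\<bar> \<le> \<kappa> * (a2 - a1)"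
    using contraction[of "replicate \<mu> \<beta>" a2 a1] interval by (auto simp: set_replicate_conv_if)
  then have "0 \<le> \<kappa> * (a2 - a1)" by linarith
  then show ?thesis using interval by (simp add: zero_le_mult_iff)
qed

lemma orbit_derivative_le_\<kappa>:
  assumes us: "us \<in> words B \<mu>" and x: "x \<in> {a1<..<a2}"
  shows "orbit_weight \<theta> \<theta>1 us x \<le> \<kappa>"
proof (rule has_real_derivative_le_Lipschitz)
  show "(theta_word \<theta> us has_real_derivative orbit_weight \<theta> \<theta>1 us x) (at x within {a1..a2})"
    using closed.theta_word_has_derivative[OF \<theta>_deriv] us x by (auto simp: words_def)
  show "\<bar>theta_word \<theta> us y - theta_word \<theta> us x\<bar> \<le> \<kappa> * \<bar>y - x\<bar>" if "y \<in> {a1..a2}" for y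
    using contraction that us x by (auto simp: words_def)
qed (use x in auto)

lemma lam_pos: "0 < lam"
proof -
  have a1: "a1 \<in> {a1..a2}" using interval by auto
  have "0 < (\<Sum>\<beta>\<in>B. b \<beta> a1 powr s * v (\<theta> \<beta> a1))"
    using a1 b_pos v_pos \<theta>_maps_Icc by (intro sum_pos[OF finite_B B_nonempty] mult_pos_pos) force+
  also have "\<dots> = lam * v a1" using eigen[OF a1] by (simp add: L_op_def)
  finally show ?thesis using v_pos[OF a1] by (simp add: zero_less_mult_iff)
qed

lemma eigen_deriv1:
  assumes x: "x \<in> {a1..a2}"
  shows "lam * v1 x = (\<Sum>\<beta>\<in>B. s * b \<beta> x powr (s - 1) * b1 \<beta> x * v (\<theta> \<beta> x)
                                + b \<beta> x powr s * \<theta>1 \<beta> x * v1 (\<theta> \<beta> x))"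
proof (rule has_real_derivative_sum_eq_on_Icc[OF interval x _ _ v_deriv[OF x]])
  show "(\<Sum>\<beta>\<in>B. b \<beta> y powr s * v (\<theta> \<beta> y)) = lam * v y" if "y \<in> {a1..a2}" for y
    using eigen[OF that] by (simp add: L_op_def)
  show "((\<lambda>y. b \<beta> y powr s * v (\<theta> \<beta> y)) has_real_derivative
          s * b \<beta> x powr (s - 1) * b1 \<beta> x * v (\<theta> \<beta> x) + b \<beta> x powr s * \<theta>1 \<beta> x * v1 (\<theta> \<beta> x))
          (at x within {a1..a2})" if "\<beta> \<in> B" for \<beta>
    using that x \<theta>_maps_Icc
    by (intro has_real_derivative_powr_mult_comp[OF b_deriv b_pos \<theta>_deriv _ v_deriv]) blast+
qed

text \<open>The coefficient of \<open>v \<circ> \<theta>\<^sub>\<beta>\<close> collects to \<open>s b\<^sup>s\<^sup>-\<^sup>2 (b'' b - (1 - s) b'\<^sup>2)\<close>,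
  which is where the convexity hypothesis enters.\<close>
lemma eigen_term_deriv2:
  assumes \<beta>: "\<beta> \<in> B" and x: "x \<in> {a1..a2}"
  shows "((\<lambda>y. s * b \<beta> y powr (s - 1) * b1 \<beta> y * v (\<theta> \<beta> y) + b \<beta> y powr s * \<theta>1 \<beta> y * v1 (\<theta> \<beta> y))
    has_real_derivative
        s * b \<beta> x powr (s - 2) * (b2 \<beta> x * b \<beta> x - (1 - s) * (b1 \<beta> x)\<^sup>2) * v (\<theta> \<beta> x)
      + (2 * s * b \<beta> x powr (s - 1) * b1 \<beta> x * \<theta>1 \<beta> x + b \<beta> x powr s * \<theta>2 \<beta> x) * v1 (\<theta> \<beta> x)
      + b \<beta> x powr s * \<theta>1 \<beta> x ^ 2 * v2 (\<theta> \<beta> x)) (at x within {a1..a2})"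
    (is "(?f has_real_derivative ?D) _")
proof -
  have \<theta>x: "\<theta> \<beta> x \<in> {a1..a2}" and maps: "\<theta> \<beta> ` {a1..a2} \<subseteq> {a1..a2}"
    using \<theta>_maps_Icc[OF \<beta>] x by blast+
  have bx: "0 < b \<beta> x" using b_pos \<beta> x by blast
  have P': "((\<lambda>y. b \<beta> y powr (s - 1) * v (\<theta> \<beta> y)) has_real_derivative
      (s - 1) * b \<beta> x powr (s - 1 - 1) * b1 \<beta> x * v (\<theta> \<beta> x) + b \<beta> x powr (s - 1) * \<theta>1 \<beta> x * v1 (\<theta> \<beta> x))
      (at x within {a1..a2})"
    using \<beta> x \<theta>x maps bx by (intro has_real_derivative_powr_mult_comp[OF b_deriv _ \<theta>_deriv _ v_deriv])
  have Q': "((\<lambda>y. b \<beta> y powr s * v1 (\<theta> \<beta> y)) has_real_derivative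
      s * b \<beta> x powr (s - 1) * b1 \<beta> x * v1 (\<theta> \<beta> x) + b \<beta> x powr s * \<theta>1 \<beta> x * v2 (\<theta> \<beta> x))
      (at x within {a1..a2})"
    using \<beta> x \<theta>x maps bx by (intro has_real_derivative_powr_mult_comp[OF b_deriv _ \<theta>_deriv _ v1_deriv])
  have "b \<beta> x powr (s - 1) = b \<beta> x powr (s - 2) * b \<beta> x"
    using bx powr_add[of "b \<beta> x" "s - 2" 1] by simp
  then have "((\<lambda>y. s * b1 \<beta> y * (b \<beta> y powr (s - 1) * v (\<theta> \<beta> y)) + \<theta>1 \<beta> y * (b \<beta> y powr s * v1 (\<theta> \<beta> y)))
      has_real_derivative ?D) (at x within {a1..a2})"
    by (intro DERIV_add[OF DERIV_mult[OF DERIV_cmult[OF b1_deriv[OF \<beta> x]] P']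
          DERIV_mult[OF \<theta>1_deriv[OF \<beta> x] Q'], THEN DERIV_cong])
      (simp add: algebra_simps power2_eq_square)
  then show ?thesis by (simp add: mult_ac)
qed

lemma eigen_deriv2:
  assumes x: "x \<in> {a1..a2}"
  shows "lam * v2 x = (\<Sum>\<beta>\<in>B. s * b \<beta> x powr (s - 2) * (b2 \<beta> x * b \<beta> x - (1 - s) * (b1 \<beta> x)\<^sup>2) * v (\<theta> \<beta> x)
      + (2 * s * b \<beta> x powr (s - 1) * b1 \<beta> x * \<theta>1 \<beta> x + b \<beta> x powr s * \<theta>2 \<beta> x) * v1 (\<theta> \<beta> x)
      + b \<beta> x powr s * \<theta>1 \<beta> x ^ 2 * v2 (\<theta> \<beta> x))"
  by (rule has_real_derivative_sum_eq_on_Icc[OF interval x eigen_deriv1[symmetric] _ v1_deriv[OF x]])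
    (auto intro: eigen_term_deriv2[OF _ x])

lemma supersolution_nonneg_Icc:
  assumes g_continuous: "continuous_on {a1..a2} g" and k: "0 < k"
    and g_super: "\<And>x. x \<in> {a1<..<a2} \<Longrightarrow>
      (\<Sum>\<beta>\<in>B. b \<beta> x powr s * \<theta>1 \<beta> x ^ k * g (\<theta> \<beta> x)) \<le> lam * g x"
    and x: "x \<in> {a1..a2}"
  shows "0 \<le> g x"
proof -
  have I: "compact {a1..a2}" "{a1..a2} \<noteq> {}" using interval by auto
  obtain G where G: "\<forall>y\<in>{a1..a2}. \<bar>g y\<bar> \<le> G"
    using compact_imp_bounded[OF compact_continuous_image[OF g_continuous I(1)]]
    unfolding bounded_real by auto
  obtain x0 where x0: "x0 \<in> {a1..a2}" "\<forall>y\<in>{a1..a2}. v x0 \<le> v y"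
    using continuous_attains_inf[OF I v_continuous] by blast
  have "0 \<le> g y" if "y \<in> {a1<..<a2}" for y
  proof (rule interior.supersolution_nonneg[where w = "\<lambda>\<beta> y. b \<beta> y powr s" and v = v and c = "v x0" and G = G,
        OF _ \<theta>1_nonneg orbit_derivative_le_\<kappa> \<kappa>_nonneg \<kappa>_less_1 k lam_pos _ _ _ _ g_super that])
    show "(\<Sum>\<beta>\<in>B. b \<beta> y powr s * v (\<theta> \<beta> y)) \<le> lam * v y" if "y \<in> {a1<..<a2}" for y
      using eigen[of y] that by (simp add: L_op_def)
  qed (use G x0 v_pos in auto)
  then show ?thesis using continuous_on_Icc_nonneg[OF interval g_continuous] x by blast
qed

lemma v1_nonneg:
  assumes "x \<in> {a1..a2}"
  shows "0 \<le> v1 x"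
proof (rule supersolution_nonneg_Icc[OF v1_continuous, of 1 x])
  fix x assume x: "x \<in> {a1<..<a2}"
  then have "(\<Sum>\<beta>\<in>B. b \<beta> x powr s * \<theta>1 \<beta> x ^ 1 * v1 (\<theta> \<beta> x))
      \<le> (\<Sum>\<beta>\<in>B. s * b \<beta> x powr (s - 1) * b1 \<beta> x * v (\<theta> \<beta> x) + b \<beta> x powr s * \<theta>1 \<beta> x * v1 (\<theta> \<beta> x))"
  proof (intro sum_mono)
    fix \<beta> assume \<beta>: "\<beta> \<in> B"
    have "\<theta> \<beta> x \<in> {a1..a2}" using closed.maps_into[OF \<beta>] x by auto
    then have "0 \<le> s * b \<beta> x powr (s - 1) * b1 \<beta> x * v (\<theta> \<beta> x)"
      using s_pos b1_nonneg[OF \<beta> x] v_pos by (simp add: less_imp_le)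
    then show "b \<beta> x powr s * \<theta>1 \<beta> x ^ 1 * v1 (\<theta> \<beta> x)
      \<le> s * b \<beta> x powr (s - 1) * b1 \<beta> x * v (\<theta> \<beta> x) + b \<beta> x powr s * \<theta>1 \<beta> x * v1 (\<theta> \<beta> x)"
      by simp
  qed
  also have "\<dots> = lam * v1 x" using eigen_deriv1 x by simp
  finally show "(\<Sum>\<beta>\<in>B. b \<beta> x powr s * \<theta>1 \<beta> x ^ 1 * v1 (\<theta> \<beta> x)) \<le> lam * v1 x" .
qed (use assms in auto)

lemma v2_nonneg:
  assumes "x \<in> {a1..a2}"
  shows "0 \<le> v2 x"
proof (rule supersolution_nonneg_Icc[OF v2_continuous, of 2 x])
  fix x assume x: "x \<in> {a1<..<a2}"
  then have "(\<Sum>\<beta>\<in>B. b \<beta> x powr s * \<theta>1 \<beta> x ^ 2 * v2 (\<theta> \<beta> x))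
      \<le> (\<Sum>\<beta>\<in>B. s * b \<beta> x powr (s - 2) * (b2 \<beta> x * b \<beta> x - (1 - s) * (b1 \<beta> x)\<^sup>2) * v (\<theta> \<beta> x)
        + (2 * s * b \<beta> x powr (s - 1) * b1 \<beta> x * \<theta>1 \<beta> x + b \<beta> x powr s * \<theta>2 \<beta> x) * v1 (\<theta> \<beta> x)
        + b \<beta> x powr s * \<theta>1 \<beta> x ^ 2 * v2 (\<theta> \<beta> x))"
  proof (intro sum_mono)
    fix \<beta> assume \<beta>: "\<beta> \<in> B"
    have "\<theta> \<beta> x \<in> {a1..a2}" using closed.maps_into[OF \<beta>] x by auto
    then have "0 \<le> s * b \<beta> x powr (s - 2) * (b2 \<beta> x * b \<beta> x - (1 - s) * (b1 \<beta> x)\<^sup>2) * v (\<theta> \<beta> x)"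
        and "0 \<le> (2 * s * b \<beta> x powr (s - 1) * b1 \<beta> x * \<theta>1 \<beta> x + b \<beta> x powr s * \<theta>2 \<beta> x) * v1 (\<theta> \<beta> x)"
      using s_pos convexity[OF \<beta> x] b1_nonneg[OF \<beta> x] \<theta>1_nonneg[OF \<beta> x] \<theta>2_nonneg[OF \<beta> x]
        v_pos v1_nonneg by (simp_all add: less_imp_le)
    then show "b \<beta> x powr s * \<theta>1 \<beta> x ^ 2 * v2 (\<theta> \<beta> x)
      \<le> s * b \<beta> x powr (s - 2) * (b2 \<beta> x * b \<beta> x - (1 - s) * (b1 \<beta> x)\<^sup>2) * v (\<theta> \<beta> x)
        + (2 * s * b \<beta> x powr (s - 1) * b1 \<beta> x * \<theta>1 \<beta> x + b \<beta> x powr s * \<theta>2 \<beta> x) * v1 (\<theta> \<beta> x)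
        + b \<beta> x powr s * \<theta>1 \<beta> x ^ 2 * v2 (\<theta> \<beta> x)"
      by linarith
  qed
  also have "\<dots> = lam * v2 x" using eigen_deriv2 x by simp
  finally show "(\<Sum>\<beta>\<in>B. b \<beta> x powr s * \<theta>1 \<beta> x ^ 2 * v2 (\<theta> \<beta> x)) \<le> lam * v2 x" .
qed (use assms in auto)

lemma v1_pos:
  assumes u: "u \<in> {a1..a2}" and b1_pos: "\<And>\<beta>. \<beta> \<in> B \<Longrightarrow> 0 < b1 \<beta> u"
  shows "0 < v1 u"
proof -
  have "0 < (\<Sum>\<beta>\<in>B. s * b \<beta> u powr (s - 1) * b1 \<beta> u * v (\<theta> \<beta> u) + b \<beta> u powr s * \<theta>1 \<beta> u * v1 (\<theta> \<beta> u))"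
  proof (rule sum_pos[OF finite_B B_nonempty])
    fix \<beta> assume \<beta>: "\<beta> \<in> B"
    have \<theta>u: "\<theta> \<beta> u \<in> {a1..a2}" using closed.maps_into[OF \<beta> u] .
    have "0 < s * b \<beta> u powr (s - 1) * b1 \<beta> u * v (\<theta> \<beta> u)"
      using s_pos b_pos[OF \<beta> u] b1_pos[OF \<beta>] v_pos[OF \<theta>u] by (simp add: zero_less_mult_iff)
    moreover have "0 \<le> b \<beta> u powr s * \<theta>1 \<beta> u * v1 (\<theta> \<beta> u)"
      using \<theta>1_nonneg_Icc[OF \<beta> u] v1_nonneg[OF \<theta>u] by simp
    ultimately show "0 < s * b \<beta> u powr (s - 1) * b1 \<beta> u * v (\<theta> \<beta> u) + b \<beta> u powr s * \<theta>1 \<beta> u * v1 (\<theta> \<beta> u)"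
      by linarith
  qed
  then have "0 < lam * v1 u" using eigen_deriv1[OF u] by linarith
  then show ?thesis using lam_pos zero_less_mult_pos by blast
qed

lemma v2_pos:
  assumes u: "u \<in> {a1..a2}"
    and strict_convexity: "\<And>\<beta>. \<beta> \<in> B \<Longrightarrow> 0 < b2 \<beta> u * b \<beta> u - (1 - s) * (b1 \<beta> u)\<^sup>2"
  shows "0 < v2 u"
proof -
  have "0 < (\<Sum>\<beta>\<in>B. s * b \<beta> u powr (s - 2) * (b2 \<beta> u * b \<beta> u - (1 - s) * (b1 \<beta> u)\<^sup>2) * v (\<theta> \<beta> u)
        + (2 * s * b \<beta> u powr (s - 1) * b1 \<beta> u * \<theta>1 \<beta> u + b \<beta> u powr s * \<theta>2 \<beta> u) * v1 (\<theta> \<beta> u)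
        + b \<beta> u powr s * \<theta>1 \<beta> u ^ 2 * v2 (\<theta> \<beta> u))"
  proof (rule sum_pos[OF finite_B B_nonempty])
    fix \<beta> assume \<beta>: "\<beta> \<in> B"
    have \<theta>u: "\<theta> \<beta> u \<in> {a1..a2}" using closed.maps_into[OF \<beta> u] .
    have "0 < s * b \<beta> u powr (s - 2) * (b2 \<beta> u * b \<beta> u - (1 - s) * (b1 \<beta> u)\<^sup>2) * v (\<theta> \<beta> u)"
      using s_pos b_pos[OF \<beta> u] strict_convexity[OF \<beta>] v_pos[OF \<theta>u] by (simp add: zero_less_mult_iff)
    moreover have "0 \<le> (2 * s * b \<beta> u powr (s - 1) * b1 \<beta> u * \<theta>1 \<beta> u + b \<beta> u powr s * \<theta>2 \<beta> u) * v1 (\<theta> \<beta> u)"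
      and "0 \<le> b \<beta> u powr s * \<theta>1 \<beta> u ^ 2 * v2 (\<theta> \<beta> u)"
      using s_pos b1_nonneg_Icc[OF \<beta> u] \<theta>1_nonneg_Icc[OF \<beta> u] \<theta>2_nonneg_Icc[OF \<beta> u]
        v1_nonneg[OF \<theta>u] v2_nonneg[OF \<theta>u] by (simp_all add: less_imp_le)
    ultimately show "0 < s * b \<beta> u powr (s - 2) * (b2 \<beta> u * b \<beta> u - (1 - s) * (b1 \<beta> u)\<^sup>2) * v (\<theta> \<beta> u)
        + (2 * s * b \<beta> u powr (s - 1) * b1 \<beta> u * \<theta>1 \<beta> u + b \<beta> u powr s * \<theta>2 \<beta> u) * v1 (\<theta> \<beta> u)
        + b \<beta> u powr s * \<theta>1 \<beta> u ^ 2 * v2 (\<theta> \<beta> u)"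
      by linarith
  qed
  then have "0 < lam * v2 u" using eigen_deriv2[OF u] by linarith
  then show ?thesis using lam_pos zero_less_mult_pos by blast
qed

end

theorem theorem6p5:
  fixes a1 a2 s :: real and m \<mu> :: nat and \<kappa> :: real and B :: "'b set"
    and b \<theta> b1 b2 \<theta>1 \<theta>2 :: "'b \<Rightarrow> real \<Rightarrow> real"
    and v v1 v2 :: "real \<Rightarrow> real" and lam :: real and F :: "real set"
  assumes H: "a1 < a2"
    and finB: "finite B" and Bne: "B \<noteq> {}"
    and m2: "m \<ge> 2"
    and Cm_b: "\<forall>\<beta>\<in>B. Cm_on m a1 a2 (b \<beta>)"
    and Cm_theta: "\<forall>\<beta>\<in>B. Cm_on m a1 a2 (\<theta> \<beta>)"
    and b_d1: "\<forall>\<beta>\<in>B. \<forall>x\<in>{a1..a2}. (b \<beta> has_real_derivative b1 \<beta> x) (at x within {a1..a2})"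
    and b_d2: "\<forall>\<beta>\<in>B. \<forall>x\<in>{a1..a2}. (b1 \<beta> has_real_derivative b2 \<beta> x) (at x within {a1..a2})"
    and th_d1: "\<forall>\<beta>\<in>B. \<forall>x\<in>{a1..a2}. (\<theta> \<beta> has_real_derivative \<theta>1 \<beta> x) (at x within {a1..a2})"
    and th_d2: "\<forall>\<beta>\<in>B. \<forall>x\<in>{a1..a2}. (\<theta>1 \<beta> has_real_derivative \<theta>2 \<beta> x) (at x within {a1..a2})"
    and b_pos: "\<forall>\<beta>\<in>B. \<forall>x\<in>{a1..a2}. b \<beta> x > 0"
    and th_maps: "\<forall>\<beta>\<in>B. \<theta> \<beta> ` {a1<..<a2} \<subseteq> {a1<..<a2}"
    and mu: "\<mu> \<ge> 1" and kappa: "\<kappa> < 1"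
    and contr: "\<forall>ws. length ws = \<mu> \<and> set ws \<subseteq> B \<longrightarrow>
        (\<forall>x\<in>{a1..a2}. \<forall>y\<in>{a1..a2}. \<bar>theta_word \<theta> ws x - theta_word \<theta> ws y\<bar> \<le> \<kappa> * \<bar>x - y\<bar>)"
    and mono: "\<forall>\<beta>\<in>B. \<forall>u\<in>{a1<..<a2}. \<theta>1 \<beta> u \<ge> 0 \<and> \<theta>2 \<beta> u \<ge> 0 \<and> b1 \<beta> u \<ge> 0 \<and> b2 \<beta> u \<ge> 0
        \<and> b2 \<beta> u * b \<beta> u - (1 - s) * (b1 \<beta> u)\<^sup>2 \<ge> 0"
    and s_pos: "s > 0"
    and v_Cm: "Cm_on m a1 a2 v"
    and v_pos: "\<forall>x\<in>{a1..a2}. v x > 0"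
    and v_eig: "\<forall>x\<in>{a1..a2}. L_op B b \<theta> s v x = lam * v x"
    and v_d1: "\<forall>x\<in>{a1..a2}. (v has_real_derivative v1 x) (at x within {a1..a2})"
    and v_d2: "\<forall>x\<in>{a1..a2}. (v1 has_real_derivative v2 x) (at x within {a1..a2})"
  shows "(\<forall>u\<in>{a1..a2}. v1 u \<ge> 0 \<and> v2 u \<ge> 0) \<and>
         ((F \<subseteq> {a1..a2} \<and>
           (\<forall>u\<in>{a1..a2} - F. \<forall>\<beta>\<in>B. b1 \<beta> u > 0 \<and> b2 \<beta> u * b \<beta> u - (1 - s) * (b1 \<beta> u)\<^sup>2 > 0))
          \<longrightarrow> (\<forall>u\<in>{a1..a2} - F. v1 u > 0 \<and> v2 u > 0))"
proof -
  have "continuous_on {a1..a2} (\<theta>2 \<beta>)" if "\<beta> \<in> B" for \<beta>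
    using Cm_on_continuous_second_derivative[OF H _ m2] Cm_theta th_d1 th_d2 that by blast
  moreover have "continuous_on {a1..a2} v2"
    using Cm_on_continuous_second_derivative[OF H v_Cm m2 v_d1 v_d2] .
  ultimately interpret ruelle_eigenfunction a1 a2 s lam \<kappa> \<mu> B b \<theta> b1 b2 \<theta>1 \<theta>2 v v1 v2
    using H finB Bne b_d1 b_d2 th_d1 th_d2 b_pos th_maps kappa contr mono s_pos v_pos v_eig v_d1 v_d2
    by unfold_locales auto
  show ?thesis using v1_nonneg v2_nonneg v1_pos v2_pos by auto
qed

end
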